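(* Let $d\ge 0$ and $t\ge 0$ be integers and let $\beta=\left\lfloor\frac{t+1}{d+1}\right\rfloor$, and assume $\beta>1$. For any simplicial complex $K$ of dimension $d$ containing $m$ simplices, the number of distinct filtrations $f:K\to\{0,1,\ldots,t\}$ is at least $\beta^{m}$. Moreover, if $\beta>(d+1)^{\delta}$ for some constant $\delta>0$, then any data structure that can represent filtrations of the class of all $d$-dimensional simplicial complexes containing $m$ simplices requires $\Omega(m\log t)$ bits to be stored.
   Context: A filtration of a simplicial complex $K$ with range $\{0,1,\ldots,t\}$ is a function $f:K\to\{0,1,\ldots,t\}$ such that $f(\tau)\le f(\sigma)$ whenever $\tau\subseteq\sigma$. A data structure representing a class of objects is an encoding of each object as a bit string such that distinct objects receive distinct encodings; its storage requirement is the maximum length of an encoding. *)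

theory Defs
  imports Complex_Main
begin

definition simplicial_complex :: "'a set set \<Rightarrow> bool" where
  "simplicial_complex K \<longleftrightarrow> finite K \<and>
     (\<forall>\<sigma>\<in>K. finite \<sigma> \<and> \<sigma> \<noteq> {}) \<and>
     (\<forall>\<sigma>\<in>K. \<forall>\<tau>. \<tau> \<subseteq> \<sigma> \<and> \<tau> \<noteq> {} \<longrightarrow> \<tau> \<in> K)"

definition complex_dim :: "'a set set \<Rightarrow> nat \<Rightarrow> bool" where
  "complex_dim K d \<longleftrightarrow> (\<exists>\<sigma>\<in>K. card \<sigma> = d + 1) \<and> (\<forall>\<sigma>\<in>K. card \<sigma> \<le> d + 1)"

text \<open>Filtrations of K with range {0..t}; functions are taken extensional
  (value 0 outside K) so that distinct filtrations are distinct functions.\<close>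
definition filtrations :: "'a set set \<Rightarrow> nat \<Rightarrow> ('a set \<Rightarrow> nat) set" where
  "filtrations K t = {f. (\<forall>\<sigma>\<in>K. f \<sigma> \<le> t) \<and>
     (\<forall>\<sigma>\<in>K. \<forall>\<tau>\<in>K. \<tau> \<subseteq> \<sigma> \<longrightarrow> f \<tau> \<le> f \<sigma>) \<and>
     (\<forall>\<sigma>. \<sigma> \<notin> K \<longrightarrow> f \<sigma> = 0)}"

definition filtered_class :: "nat \<Rightarrow> nat \<Rightarrow> nat \<Rightarrow> ('a set set \<times> ('a set \<Rightarrow> nat)) set" where
  "filtered_class d m t = {(K, f). simplicial_complex K \<and> complex_dim K d \<and> card K = m \<and>
     f \<in> filtrations K t}"

end

theory Submission
  imports Defs "HOL-Library.FuncSet"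
begin

text \<open>Put \<open>\<beta> = (t + 1) div (d + 1)\<close>. Let a simplex with \<open>k\<close> vertices take any value in the
  block \<open>[(k - 1)\<beta>, k\<beta>)\<close>: a proper face has fewer vertices, so its block lies strictly below,
  every such choice is monotone, and all blocks fit into \<open>{0..t}\<close>. This gives \<open>\<beta>^m\<close>
  filtrations, and an injective binary code of them must use a word of length about
  \<open>m log \<beta>\<close>. Finally \<open>t + 1 < (d + 1)(\<beta> + 1)\<close> and \<open>log (d + 1) < log \<beta> / \<delta>\<close> bound \<open>log t\<close>
  by a constant multiple of \<open>log \<beta>\<close>.\<close>

lemma finite_filtrations:
  assumes "finite K"
  shows "finite (filtrations K t)"
proof (rule finite_subset)
  show "filtrations K t \<subseteq> {f. \<forall>x. (x \<in> K \<longrightarrow> f x \<in> {..t}) \<and> (x \<notin> K \<longrightarrow> f x = 0)}"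
    unfolding filtrations_def by auto
  show "finite {f. \<forall>x. (x \<in> K \<longrightarrow> f x \<in> {..t}) \<and> (x \<notin> K \<longrightarrow> f x = (0::nat))}"
    using assms by (intro finite_set_of_finite_funs) auto
qed

definition staircase_filtration :: "'a set set \<Rightarrow> nat \<Rightarrow> ('a set \<Rightarrow> nat) \<Rightarrow> 'a set \<Rightarrow> nat" where
  "staircase_filtration K b g = (\<lambda>\<sigma>. if \<sigma> \<in> K then (card \<sigma> - 1) * b + g \<sigma> else 0)"

lemma staircase_filtration_in_filtrations:
  assumes K: "\<And>\<sigma>. \<sigma> \<in> K \<Longrightarrow> finite \<sigma> \<and> 0 < card \<sigma> \<and> card \<sigma> * b \<le> t + 1"
    and g: "g \<in> K \<rightarrow>\<^sub>E {..<b}"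
  shows "staircase_filtration K b g \<in> filtrations K t"
proof -
  let ?f = "staircase_filtration K b g"
  have block: "(card \<sigma> - 1) * b \<le> ?f \<sigma> \<and> ?f \<sigma> < card \<sigma> * b" if \<sigma>: "\<sigma> \<in> K" for \<sigma>
  proof -
    obtain k where "card \<sigma> = Suc k" using K[OF \<sigma>] gr0_implies_Suc by blast
    then show ?thesis using g \<sigma> by (auto simp: staircase_filtration_def)
  qed
  have "?f \<tau> \<le> ?f \<sigma>" if "\<sigma> \<in> K" "\<tau> \<in> K" "\<tau> \<subset> \<sigma>" for \<sigma> \<tau>
  proof -
    have "card \<tau> \<le> card \<sigma> - 1" using psubset_card_mono[OF _ \<open>\<tau> \<subset> \<sigma>\<close>] K[OF \<open>\<sigma> \<in> K\<close>] by simp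
    then have "card \<tau> * b \<le> (card \<sigma> - 1) * b" by (rule mult_le_mono1)
    then show ?thesis using block[OF \<open>\<sigma> \<in> K\<close>] block[OF \<open>\<tau> \<in> K\<close>] by linarith
  qed
  moreover have "?f \<sigma> \<le> t" if "\<sigma> \<in> K" for \<sigma> using block[OF that] K[OF that] by linarith
  ultimately show ?thesis
    unfolding filtrations_def by (auto simp: staircase_filtration_def subset_iff_psubset_eq)
qed

lemma inj_on_staircase_filtration: "inj_on (staircase_filtration K b) (K \<rightarrow>\<^sub>E B)"
proof (rule inj_onI)
  fix g h assume "g \<in> K \<rightarrow>\<^sub>E B" "h \<in> K \<rightarrow>\<^sub>E B"
    and "staircase_filtration K b g = staircase_filtration K b h"
  then show "g = h"
    by (intro PiE_ext) (auto simp: staircase_filtration_def fun_eq_iff split: if_splits)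
qed

lemma card_filtrations_ge:
  assumes "finite K" and "\<And>\<sigma>. \<sigma> \<in> K \<Longrightarrow> finite \<sigma> \<and> 0 < card \<sigma> \<and> card \<sigma> * b \<le> t + 1"
  shows "b ^ card K \<le> card (filtrations K t)"
proof -
  have "b ^ card K = card (staircase_filtration K b ` (K \<rightarrow>\<^sub>E {..<b}))"
    using assms(1) by (simp add: card_image inj_on_staircase_filtration card_PiE)
  also have "\<dots> \<le> card (filtrations K t)"
    using staircase_filtration_in_filtrations[OF assms(2)]
    by (intro card_mono finite_filtrations assms(1)) blast
  finally show ?thesis .
qed

lemma card_filtrations_simplicial_complex_ge:
  assumes "simplicial_complex K" and "complex_dim K d"
  shows "((t + 1) div (d + 1)) ^ card K \<le> card (filtrations K t)"
proof (rule card_filtrations_ge)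
  show "finite K" using assms(1) by (simp add: simplicial_complex_def)
  fix \<sigma> assume "\<sigma> \<in> K"
  then have "finite \<sigma>" and "\<sigma> \<noteq> {}" and "card \<sigma> \<le> d + 1"
    using assms unfolding simplicial_complex_def complex_dim_def by blast+
  have "card \<sigma> * ((t + 1) div (d + 1)) \<le> (d + 1) * ((t + 1) div (d + 1))"
    using \<open>card \<sigma> \<le> d + 1\<close> by (rule mult_le_mono1)
  also have "\<dots> \<le> t + 1" by (metis div_times_less_eq_dividend mult.commute)
  finally show "finite \<sigma> \<and> 0 < card \<sigma> \<and> card \<sigma> * ((t + 1) div (d + 1)) \<le> t + 1"
    using \<open>finite \<sigma>\<close> \<open>\<sigma> \<noteq> {}\<close> by (simp add: card_gt_0_iff)
qed

lemma card_bool_lists_length_le: "card {xs :: bool list. length xs \<le> n} = 2 ^ Suc n - 1"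
  using card_lists_length_le[of "UNIV :: bool set" n]
  by (simp add: atLeast0AtMost[symmetric] atLeastLessThanSuc_atLeastAtMost[symmetric] sum_power2)

lemma inj_on_code_long_word:
  fixes enc :: "'a \<Rightarrow> bool list"
  assumes "inj_on enc A" and "finite A" and "A \<noteq> {}"
  shows "\<exists>x\<in>A. log 2 (card A) < real (length (enc x)) + 1"
proof -
  define L where "L = Max (length ` enc ` A)"
  have "L \<in> length ` enc ` A" unfolding L_def using assms(2,3) by (intro Max_in) auto
  then obtain x where "x \<in> A" and "length (enc x) = L" by blast
  have "card A = card (enc ` A)" using assms(1) by (simp add: card_image)
  also have "\<dots> \<le> card {xs :: bool list. length xs \<le> L}"
    using assms(2) finite_lists_length_le[of "UNIV :: bool set" L]
    by (intro card_mono) (auto simp: L_def)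
  also have "\<dots> < 2 ^ Suc L" by (simp add: card_bool_lists_length_le)
  finally have "real (card A) < 2 ^ Suc L"
    by (metis of_nat_less_iff of_nat_numeral of_nat_power)
  then have "log 2 (card A) < log 2 (2 ^ Suc L)"
    using assms(2,3) by (subst log_less_cancel_iff) (auto simp: card_gt_0_iff)
  then have "log 2 (card A) < real L + 1" by (simp del: power_Suc)
  then show ?thesis using \<open>x \<in> A\<close> \<open>length (enc x) = L\<close> by blast
qed

lemma log_le_mult_log_div_of_powr_less:
  fixes \<delta> :: real and d t :: nat
  defines "\<beta> \<equiv> (t + 1) div (d + 1)"
  assumes "\<delta> > 0" and "\<beta> \<ge> 2" and "real \<beta> > real (d + 1) powr \<delta>"
  shows "log 2 t \<le> (2 + 1 / \<delta>) * log 2 \<beta>"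
proof -
  have "t + 1 = \<beta> * (d + 1) + (t + 1) mod (d + 1)" unfolding \<beta>_def by (rule div_mult_mod_eq[symmetric])
  moreover have "(t + 1) mod (d + 1) < d + 1" by simp
  moreover have "(d + 1) * (\<beta> + 1) = \<beta> * (d + 1) + (d + 1)" by (simp add: algebra_simps)
  ultimately have "t + 1 < (d + 1) * (\<beta> + 1)" by linarith
  then have "real t < real (d + 1) * (real \<beta> + 1)"
    by (metis of_nat_add of_nat_less_iff of_nat_mult of_nat_1 add_lessD1)
  moreover have "t > 0" using assms(3) div_le_dividend[of "t + 1" "d + 1"] unfolding \<beta>_def by linarith
  ultimately have "log 2 t < log 2 (real (d + 1) * (real \<beta> + 1))"
    by (subst log_less_cancel_iff) auto
  also have "\<dots> = log 2 (real (d + 1)) + log 2 (real \<beta> + 1)" by (simp add: log_mult)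
  finally have "log 2 t < log 2 (real (d + 1)) + log 2 (real \<beta> + 1)" .
  moreover have "\<delta> * log 2 (real (d + 1)) < log 2 \<beta>"
    using assms(3,4) by (simp flip: log_powr)
  then have "log 2 (real (d + 1)) < log 2 \<beta> / \<delta>" using assms(2) by (simp add: field_simps)
  moreover have "log 2 (real \<beta> + 1) \<le> log 2 (2 * \<beta>)" using assms(3) by simp
  moreover have "log 2 (2 * \<beta>) = 1 + log 2 \<beta>" using assms(3) by (simp add: log_mult)
  moreover have "1 \<le> log 2 \<beta>" using assms(3) by simp
  moreover have "(2 + 1 / \<delta>) * log 2 \<beta> = 2 * log 2 \<beta> + log 2 \<beta> / \<delta>" by (simp add: algebra_simps)
  ultimately show ?thesis by linarith
qed

lemma filtered_class_code_length_ge_log_div: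
  fixes d t m :: nat and enc :: "'a set set \<times> ('a set \<Rightarrow> nat) \<Rightarrow> bool list"
  defines "\<beta> \<equiv> (t + 1) div (d + 1)"
  assumes "\<beta> > 1"
    and "(filtered_class d m t :: ('a set set \<times> ('a set \<Rightarrow> nat)) set) \<noteq> {}"
    and "inj_on enc (filtered_class d m t)"
  shows "\<exists>x\<in>filtered_class d m t. real m * log 2 \<beta> / 2 \<le> real (length (enc x))"
proof -
  obtain K :: "'a set set" and f where "(K, f) \<in> filtered_class d m t"
    using assms(3) by auto
  then have K: "simplicial_complex K" "complex_dim K d" "card K = m"
    unfolding filtered_class_def by auto
  have "m \<ge> 1" using K unfolding simplicial_complex_def complex_dim_def
    by (metis One_nat_def Suc_leI card_gt_0_iff empty_iff)
  define S where "S = Pair K ` filtrations K t"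
  have "S \<subseteq> filtered_class d m t" unfolding S_def filtered_class_def using K by auto
  have "\<beta> ^ m \<le> card S"
    using card_filtrations_simplicial_complex_ge[OF K(1,2), of t] K(3)
    by (simp add: S_def card_image inj_on_def \<beta>_def)
  moreover have "2 \<le> \<beta> ^ m" using assms(2) self_le_power[of \<beta> m] \<open>m \<ge> 1\<close> by simp
  ultimately have "0 < card S" by linarith
  then have "finite S" and "S \<noteq> {}" unfolding card_gt_0_iff by blast+
  then obtain x where "x \<in> S" and x: "log 2 (card S) < real (length (enc x)) + 1"
    using inj_on_code_long_word inj_on_subset[OF assms(4) \<open>S \<subseteq> _\<close>] by blast
  have "real m * log 2 \<beta> = log 2 (real (\<beta> ^ m))" using assms(2) by (simp add: log_nat_power)
  also have "\<dots> \<le> log 2 (card S)"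
    using \<open>\<beta> ^ m \<le> card S\<close> assms(2) by (intro log_mono) auto
  finally have upper: "real m * log 2 \<beta> < real (length (enc x)) + 1" using x by linarith
  have "1 \<le> log 2 \<beta>" using assms(2) by simp
  then have "1 \<le> real m * log 2 \<beta>"
    using mult_mono[of 1 "real m" 1 "log 2 \<beta>"] \<open>m \<ge> 1\<close> by simp
  then have "1 \<le> real (length (enc x))" using upper by simp
  then show ?thesis using upper \<open>x \<in> S\<close> \<open>S \<subseteq> _\<close> by force
qed

lemma filtered_class_code_length_ge:
  fixes \<delta> :: real and d t m :: nat and enc :: "'a set set \<times> ('a set \<Rightarrow> nat) \<Rightarrow> bool list"
  defines "\<beta> \<equiv> (t + 1) div (d + 1)"
  assumes "\<delta> > 0" and "\<beta> > 1" and "real \<beta> > real (d + 1) powr \<delta>"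
    and "(filtered_class d m t :: ('a set set \<times> ('a set \<Rightarrow> nat)) set) \<noteq> {}"
    and "inj_on enc (filtered_class d m t)"
  shows "\<exists>x\<in>filtered_class d m t.
           1 / (2 * (2 + 1 / \<delta>)) * real m * log 2 (real t) \<le> real (length (enc x))"
proof -
  obtain x where "x \<in> filtered_class d m t" and half: "real m * log 2 \<beta> / 2 \<le> real (length (enc x))"
    using filtered_class_code_length_ge_log_div[OF assms(3,5,6)[unfolded \<beta>_def]]
    unfolding \<beta>_def by blast
  have pos: "2 + 1 / \<delta> > 0" using assms(2) by (simp add: add_pos_pos)
  have "1 / (2 * (2 + 1 / \<delta>)) * real m * log 2 t
      \<le> 1 / (2 * (2 + 1 / \<delta>)) * real m * ((2 + 1 / \<delta>) * log 2 \<beta>)"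
    using log_le_mult_log_div_of_powr_less[OF assms(2) _ assms(4)[unfolded \<beta>_def]] assms(3) pos
    unfolding \<beta>_def by (intro mult_left_mono) auto
  also have "\<dots> = real m * log 2 \<beta> / 2" using pos by (simp add: field_simps)
  also note half
  finally show ?thesis using \<open>x \<in> filtered_class d m t\<close> by blast
qed

theorem lemma3:
  shows "(\<forall>(d::nat) (t::nat) (m::nat) (K::'a set set).
            (t + 1) div (d + 1) > 1 \<longrightarrow> simplicial_complex K \<longrightarrow> complex_dim K d \<longrightarrow>
            card K = m \<longrightarrow> card (filtrations K t) \<ge> ((t + 1) div (d + 1)) ^ m)
    \<and> (\<forall>\<delta>::real. \<delta> > 0 \<longrightarrow> (\<exists>C::real. C > 0 \<and>
         (\<forall>(d::nat) (t::nat) (m::nat) (enc :: 'a set set \<times> ('a set \<Rightarrow> nat) \<Rightarrow> bool list).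
            (t + 1) div (d + 1) > 1 \<longrightarrow>
            real ((t + 1) div (d + 1)) > real (d + 1) powr \<delta> \<longrightarrow>
            (filtered_class d m t :: ('a set set \<times> ('a set \<Rightarrow> nat)) set) \<noteq> {} \<longrightarrow>
            inj_on enc (filtered_class d m t) \<longrightarrow>
            (\<exists>x\<in>filtered_class d m t. real (length (enc x)) \<ge> C * real m * log 2 (real t)))))"
proof (intro conjI allI impI exI)
  fix d t m :: nat and K :: "'a set set"
  assume "simplicial_complex K" and "complex_dim K d" and "card K = m"
  then show "card (filtrations K t) \<ge> ((t + 1) div (d + 1)) ^ m"
    using card_filtrations_simplicial_complex_ge by blast
next
  fix \<delta> :: real
  assume "\<delta> > 0"
  then show "1 / (2 * (2 + 1 / \<delta>)) > 0" by (simp add: add_pos_pos)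
next
  fix \<delta> :: real and d t m :: nat and enc :: "'a set set \<times> ('a set \<Rightarrow> nat) \<Rightarrow> bool list"
  assume "\<delta> > 0" and "(t + 1) div (d + 1) > 1" and "real ((t + 1) div (d + 1)) > real (d + 1) powr \<delta>"
    and "(filtered_class d m t :: ('a set set \<times> ('a set \<Rightarrow> nat)) set) \<noteq> {}"
    and "inj_on enc (filtered_class d m t)"
  then show "\<exists>x\<in>filtered_class d m t.
               1 / (2 * (2 + 1 / \<delta>)) * real m * log 2 (real t) \<le> real (length (enc x))"
    by (rule filtered_class_code_length_ge)
qed

end
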